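(* Let $d\ge1$, $\alpha\in(0,2)$, $\mu\in(0,\min\{\alpha,1\})$, $\lambda>0$, $\delta_i\in(0,1)$, and let $\omega_i=\omega_\lambda^{\delta_i,\mu}$. Define, for $\xi>0$, \[ A_{\alpha,i}(\xi):=c_\alpha\,\mathrm{p.v.}\int_{\mathbb{R}^d}\frac{\omega_i(|\xi e_1-z|)-\omega_i(\xi)}{|z|^{d+\alpha}}\,dz . \] Then there is a constant $C_2>0$ depending only on $\alpha$, $d$ and $\mu$ such that for every $\xi>0$, \[ A_{\alpha,i}(\xi)\le\begin{cases} C_2\,\delta_i\,\lambda^{-\mu}\xi^{\mu-\alpha}, & 0<\xi\le\lambda,\\ C_2\,\delta_i\,\xi^{-\alpha}, & \xi\ge\lambda.\end{cases} \]
   Context: $e_1=(1,0,\dots,0)\in\mathbb{R}^d$. $c_\alpha=\frac{2^\alpha\Gamma(\frac{d+\alpha}{2})}{\pi^{d/2}|\Gamma(-\frac\alpha2)|}>0$ is the normalizing constant of the fractional Laplacian. For $\delta>0$, $\mu\in(0,1)$, $\lambda>0$, the modulus of continuity $\omega_\lambda^{\delta,\mu}:(0,\infty)\to(0,\infty)$ is \[ \omega_\lambda^{\delta,\mu}(\xi)=\begin{cases}\delta\lambda^{-1}\xi-\frac14\delta\lambda^{-1-\mu}\xi^{1+\mu}, & 0<\xi\le\lambda,\\ \frac34\delta+\frac12\delta\log\frac\xi\lambda, & \xi>\lambda.\end{cases} \] *)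

theory Defs
  imports "HOL-Analysis.Analysis"
begin

definition frac_const :: "nat \<Rightarrow> real \<Rightarrow> real" where
  "frac_const d \<alpha> = 2 powr \<alpha> * Gamma ((real d + \<alpha>) / 2) /
      (pi powr (real d / 2) * \<bar>Gamma (- \<alpha> / 2)\<bar>)"

definition omega_mod :: "real \<Rightarrow> real \<Rightarrow> real \<Rightarrow> real \<Rightarrow> real" where
  "omega_mod \<delta> \<mu> lam \<xi> =
     (if \<xi> \<le> lam then \<delta> / lam * \<xi> - 1/4 * \<delta> * lam powr (-1 - \<mu>) * \<xi> powr (1 + \<mu>)
      else 3/4 * \<delta> + 1/2 * \<delta> * ln (\<xi> / lam))"

definition A_trunc :: "real \<Rightarrow> real \<Rightarrow> real \<Rightarrow> real \<Rightarrow> 'a::euclidean_space \<Rightarrow> real \<Rightarrow> real \<Rightarrow> real" where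
  "A_trunc \<alpha> \<delta> \<mu> lam e \<xi> \<epsilon> =
     frac_const DIM('a) \<alpha> *
     (LINT z : {z::'a. norm z > \<epsilon>} | lborel.
        (omega_mod \<delta> \<mu> lam (norm (\<xi> *\<^sub>R e - z)) - omega_mod \<delta> \<mu> lam \<xi>)
          / norm z powr (real DIM('a) + \<alpha>))"

text \<open>Principal value A_{alpha}(xi), taken as the limsup of the truncated integrals
  as eps -> 0+ (in the extended reals; equals the p.v. whenever the latter exists).\<close>
definition A_pv :: "real \<Rightarrow> real \<Rightarrow> real \<Rightarrow> real \<Rightarrow> 'a::euclidean_space \<Rightarrow> real \<Rightarrow> ereal" where
  "A_pv \<alpha> \<delta> \<mu> lam e \<xi> = Limsup (at_right 0) (\<lambda>\<epsilon>. ereal (A_trunc \<alpha> \<delta> \<mu> lam e \<xi> \<epsilon>))"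

end

theory Submission
  imports Defs
begin

(* Writing omega(x) = delta * omega_1(x / lambda), the normalized modulus omega_1 is concave on
   [0, oo): both pieces are concave, they agree at 1, and the slope drops there from (3 - mu)/4
   to 1/2. Pairing z with -z turns the truncated integrand into the symmetric second difference
   (omega(|xi e - z|) + omega(|xi e + z|))/2 - omega(xi), divided by |z|^(d + alpha). For |z| <= xi,
   concavity and |xi e - z| + |xi e + z| <= 2 xi + |z|^2/xi bound it by omega'(xi) |z|^2/(2 xi);
   for |z| > xi the sublinear growth of omega bounds it by a multiple of (|z|/xi)^mu. In both
   regimes the bound is a multiple of delta F(xi/lambda) phi(|z|/xi), with F(t) = min(t, 1)^mu and
   phi(s) = s^2 or s^mu according as s <= 1 or s > 1, and the substitution z = xi w leaves
   xi^(-alpha) times the integral of phi(|w|) |w|^(-d-alpha), which converges since mu < alpha < 2.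
   The estimate is uniform in the truncation, so it passes to the limsup. *)

section \<open>Concavity and growth of the modulus\<close>

lemma powr_tangent_le:
  fixes x m p :: real
  assumes "0 \<le> x" "0 < m" "1 \<le> p"
  shows "m powr p + p * m powr (p - 1) * (x - m) \<le> x powr p"
proof (cases "x = 0")
  case True
  have "m powr (p - 1) * m = m powr p" using assms by (simp add: powr_diff)
  then show ?thesis using True assms mult_left_mono[of 1 p "m powr p"]
    by (simp add: algebra_simps)
next
  case False
  then have "0 < x" using assms by simp
  then have "p * m powr (p - 1) * (x - m) \<le> x powr p - m powr p"
    using assms powr_convex[OF assms(3)]
    by (intro convex_on_imp_above_tangent[where A="{0<..}"])
       (auto simp: interior_open intro!: has_field_derivative_at_within has_real_derivative_powr)
  then show ?thesis by simp
qed

lemma ln_tangent_le: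
  fixes x m :: real
  assumes "0 < x" "0 < m"
  shows "ln x \<le> ln m + (x - m) / m"
proof -
  have "ln (x / m) \<le> x / m - 1" using assms by (intro ln_le_minus_one) auto
  then show ?thesis using assms by (simp add: ln_div diff_divide_distrib)
qed

lemma tangent_slope_antimono:
  fixes f f' :: "real \<Rightarrow> real"
  assumes "f m \<le> f n + f' n * (m - n)" "f n \<le> f m + f' m * (n - m)" "n < m"
  shows "f' m \<le> f' n"
proof -
  have "0 \<le> (f' n - f' m) * (m - n)" using assms(1,2) by (simp add: algebra_simps)
  then show ?thesis using assms(3) by (simp add: zero_le_mult_iff)
qed

lemma piecewise_le_tangent:
  fixes g h g' h' :: "real \<Rightarrow> real" and a c x m :: real
  assumes g: "\<And>y n. a \<le> y \<Longrightarrow> y \<le> c \<Longrightarrow> a < n \<Longrightarrow> n \<le> c \<Longrightarrow> g y \<le> g n + g' n * (y - n)"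
    and h: "\<And>y n. c \<le> y \<Longrightarrow> c \<le> n \<Longrightarrow> h y \<le> h n + h' n * (y - n)"
    and gh: "g c = h c" and slope: "h' c \<le> g' c" and "a < c" and "a \<le> x" "a < m"
  shows "(if x \<le> c then g x else h x)
           \<le> (if m \<le> c then g m else h m) + (if m \<le> c then g' m else h' m) * (x - m)"
proof (cases "m \<le> c")
  case m: True
  show ?thesis
  proof (cases "x \<le> c")
    case False
    have "g' c \<le> g' m"
      using tangent_slope_antimono[of g c m g'] g[of c m] g[of m c] m \<open>a < c\<close> \<open>a < m\<close>
      by (cases "m = c") auto
    then have "g' c * (x - c) \<le> g' m * (x - c)" using False by (intro mult_right_mono) auto
    moreover have "h' c * (x - c) \<le> g' c * (x - c)" using False slope by (intro mult_right_mono) auto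
    moreover have "h x \<le> h c + h' c * (x - c)" using h[of x c] False by simp
    moreover have "g c \<le> g m + g' m * (c - m)" using g[of c m] m \<open>a < c\<close> \<open>a < m\<close> by simp
    ultimately show ?thesis using m False gh by (simp add: algebra_simps)
  qed (use g m \<open>a \<le> x\<close> \<open>a < m\<close> in auto)
next
  case m: False
  show ?thesis
  proof (cases "x \<le> c")
    case True
    have "h' m \<le> h' c" using tangent_slope_antimono[of h m c h'] h[of c m] h[of m c] m by simp
    then have "h' c * (x - c) \<le> h' m * (x - c)" using True by (intro mult_right_mono_neg) auto
    moreover have "g' c * (x - c) \<le> h' c * (x - c)" using True slope by (intro mult_right_mono_neg) auto
    moreover have "g x \<le> g c + g' c * (x - c)" using g[of x c] True \<open>a \<le> x\<close> \<open>a < c\<close> by simp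
    moreover have "h c \<le> h m + h' m * (c - m)" using h[of c m] m by simp
    ultimately show ?thesis using m True gh by (simp add: algebra_simps)
  qed (use h m in auto)
qed

abbreviation omega_unit :: "real \<Rightarrow> real \<Rightarrow> real" where
  "omega_unit \<mu> \<equiv> omega_mod 1 \<mu> 1"

lemma omega_unit_eq: "omega_unit \<mu> t = (if t \<le> 1 then t - t powr (1 + \<mu>) / 4 else 3/4 + ln t / 2)"
  by (simp add: omega_mod_def)

lemma omega_mod_eq_scaled:
  assumes "0 < lam" "0 \<le> x"
  shows "omega_mod \<delta> \<mu> lam x = \<delta> * omega_unit \<mu> (x / lam)"
proof -
  have "lam powr (-1 - \<mu>) = inverse (lam powr (1 + \<mu>))"
    by (simp add: powr_minus[symmetric])
  then have "lam powr (-1 - \<mu>) * x powr (1 + \<mu>) = (x / lam) powr (1 + \<mu>)"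
    unfolding powr_divide by (simp add: divide_inverse mult.commute)
  then show ?thesis using assms by (simp add: omega_mod_def omega_unit_eq field_simps)
qed

(* At t = 1 this is the left derivative; the right one, 1/2, is smaller, which keeps the
   pasted function concave. *)
definition omega_unit_deriv :: "real \<Rightarrow> real \<Rightarrow> real" where
  "omega_unit_deriv \<mu> t = (if t \<le> 1 then 1 - (1 + \<mu>) / 4 * t powr \<mu> else 1 / (2 * t))"

lemma omega_unit_le_tangent:
  assumes "0 < \<mu>" "\<mu> \<le> 1" "0 \<le> x" "0 < m"
  shows "omega_unit \<mu> x \<le> omega_unit \<mu> m + omega_unit_deriv \<mu> m * (x - m)"
  unfolding omega_unit_eq omega_unit_deriv_def
proof (rule piecewise_le_tangent[where g = "\<lambda>t. t - t powr (1 + \<mu>) / 4"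
      and h = "\<lambda>t. 3/4 + ln t / 2"
      and g' = "\<lambda>t. 1 - (1 + \<mu>) / 4 * t powr \<mu>" and h' = "\<lambda>t. 1 / (2 * t)" and a = 0])
  fix y n :: real
  assume "0 \<le> y" "0 < n"
  then have "n powr (1 + \<mu>) + (1 + \<mu>) * n powr \<mu> * (y - n) \<le> y powr (1 + \<mu>)"
    using powr_tangent_le[of y n "1 + \<mu>"] assms by simp
  moreover have "n powr (1 + \<mu>) = n * n powr \<mu>" using \<open>0 < n\<close> by (simp add: powr_add)
  ultimately show "y - y powr (1 + \<mu>) / 4
      \<le> n - n powr (1 + \<mu>) / 4 + (1 - (1 + \<mu>) / 4 * n powr \<mu>) * (y - n)"
    by (simp add: field_simps)
next
  fix y n :: real
  assume "1 \<le> y" "1 \<le> n"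
  then show "3/4 + ln y / 2 \<le> 3/4 + ln n / 2 + 1 / (2 * n) * (y - n)"
    using ln_tangent_le[of y n] by (simp add: field_simps)
qed (use assms in auto)

lemma omega_unit_deriv_nonneg:
  assumes "0 < \<mu>" "\<mu> \<le> 1" "0 < m"
  shows "0 \<le> omega_unit_deriv \<mu> m"
proof (cases "m \<le> 1")
  case True
  then have "(1 + \<mu>) * m powr \<mu> \<le> 2 * 1"
    using assms by (intro mult_mono powr_le1) auto
  then show ?thesis using True by (simp add: omega_unit_deriv_def)
qed (use assms in \<open>simp add: omega_unit_deriv_def\<close>)

lemma omega_unit_mono:
  assumes "0 < \<mu>" "\<mu> \<le> 1" "0 \<le> x" "x \<le> y"
  shows "omega_unit \<mu> x \<le> omega_unit \<mu> y"
proof (cases "y = 0")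
  case False
  then have "0 < y" using assms by simp
  have "omega_unit_deriv \<mu> y * (x - y) \<le> 0"
    using omega_unit_deriv_nonneg[OF assms(1,2) \<open>0 < y\<close>] assms by (simp add: mult_nonneg_nonpos)
  then show ?thesis using omega_unit_le_tangent[OF assms(1-3) \<open>0 < y\<close>] by simp
qed (use assms in simp)

lemma omega_unit_nonneg:
  assumes "0 < \<mu>" "\<mu> \<le> 1" "0 \<le> x"
  shows "0 \<le> omega_unit \<mu> x"
  using omega_unit_mono[OF assms(1,2) order_refl assms(3)] by (simp add: omega_unit_eq)

lemma omega_unit_le_powr:
  assumes "0 < \<mu>" "\<mu> \<le> 1" "0 \<le> x"
  shows "omega_unit \<mu> x \<le> 2 / \<mu> * x powr \<mu>"
proof (cases "x \<le> 1")
  case True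
  have "omega_unit \<mu> x = x - x powr (1 + \<mu>) / 4" using True by (simp add: omega_unit_eq)
  also have "\<dots> \<le> x powr 1" using assms by simp
  also have "\<dots> \<le> x powr \<mu>" using True assms by (intro powr_mono') auto
  also have "\<dots> = 1 * x powr \<mu>" by simp
  also have "\<dots> \<le> 2 / \<mu> * x powr \<mu>" using assms by (intro mult_right_mono) (auto simp: field_simps)
  finally show ?thesis .
next
  case False
  have "1 \<le> x powr \<mu>" using False assms by (simp add: ge_one_powr_ge_zero)
  moreover have "ln x \<le> x powr \<mu> / \<mu>" using False assms by (intro ln_powr_bound) auto
  ultimately have "3/4 + ln x / 2 \<le> 3/4 * x powr \<mu> + (x powr \<mu> / \<mu>) / 2"
    by (intro add_mono divide_right_mono) auto
  also have "\<dots> = (3/4 + 1 / (2 * \<mu>)) * x powr \<mu>" by (simp add: field_simps)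
  also have "\<dots> \<le> 2 / \<mu> * x powr \<mu>"
    using assms by (intro mult_right_mono) (auto simp: field_simps)
  finally show ?thesis using False by (simp add: omega_unit_eq)
qed

section \<open>Second differences of the modulus\<close>

(* omega_scale mu (xi / lam) * xi powr (-alpha) is lam powr (-mu) * xi powr (mu - alpha) for
   xi <= lam and xi powr (-alpha) otherwise: the two branches of the claimed bound. *)
definition omega_scale :: "real \<Rightarrow> real \<Rightarrow> real" where
  "omega_scale \<mu> t = (if t \<le> 1 then t powr \<mu> else 1)"

lemma omega_scale_nonneg: "0 \<le> omega_scale \<mu> t"
  by (simp add: omega_scale_def)

lemma omega_unit_deriv_mult_le:
  assumes "0 < \<mu>" "\<mu> \<le> 1" "0 < m"
  shows "omega_unit_deriv \<mu> m * m \<le> omega_scale \<mu> m"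
proof (cases "m \<le> 1")
  case True
  have "omega_unit_deriv \<mu> m * m \<le> 1 * m"
    using True assms by (intro mult_right_mono) (auto simp: omega_unit_deriv_def)
  also have "\<dots> = m powr 1" using assms by simp
  also have "\<dots> \<le> m powr \<mu>" using True assms by (intro powr_mono') auto
  finally show ?thesis using True by (simp add: omega_scale_def)
qed (use assms in \<open>simp add: omega_unit_deriv_def omega_scale_def\<close>)

lemma omega_unit_diff_le_far:
  assumes "0 < \<mu>" "\<mu> \<le> 1" "0 < \<xi>" "\<xi> < r" "0 \<le> a" "a \<le> \<xi> + r"
  shows "omega_unit \<mu> a - omega_unit \<mu> \<xi> \<le> 4 / \<mu> * omega_scale \<mu> \<xi> * (r / \<xi>) powr \<mu>"
proof -
  have two: "2 powr \<mu> \<le> 2" using assms powr_mono[of \<mu> 1 2] by simp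
  have "omega_unit \<mu> a \<le> omega_unit \<mu> (2 * r)" using assms by (intro omega_unit_mono) auto
  moreover have "omega_unit \<mu> (2 * r) - omega_unit \<mu> \<xi> \<le> 4 / \<mu> * omega_scale \<mu> \<xi> * (r / \<xi>) powr \<mu>"
  proof (cases "\<xi> \<le> 1")
    case True
    have "omega_unit \<mu> (2 * r) - omega_unit \<mu> \<xi> \<le> 2 / \<mu> * (2 * r) powr \<mu>"
      using omega_unit_le_powr[of \<mu> "2 * r"] omega_unit_nonneg[of \<mu> \<xi>] assms by simp
    also have "(2 * r) powr \<mu> = 2 powr \<mu> * (\<xi> powr \<mu> * (r / \<xi>) powr \<mu>)"
      using assms by (simp add: powr_mult flip: powr_mult[of \<xi>])
    also have "2 / \<mu> * (2 powr \<mu> * (\<xi> powr \<mu> * (r / \<xi>) powr \<mu>))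
        \<le> 2 / \<mu> * (2 * (\<xi> powr \<mu> * (r / \<xi>) powr \<mu>))"
      using two assms by (intro mult_left_mono mult_right_mono) auto
    finally show ?thesis using True by (simp add: omega_scale_def)
  next
    case False
    have "omega_unit \<mu> (2 * r) - omega_unit \<mu> \<xi> = ln (2 * (r / \<xi>)) / 2"
      using False assms by (simp add: omega_unit_eq ln_div ln_mult)
    also have "\<dots> \<le> (2 * (r / \<xi>)) powr \<mu> / \<mu> / 2"
      using assms by (intro divide_right_mono ln_powr_bound) auto
    also have "\<dots> = 2 powr \<mu> * (r / \<xi>) powr \<mu> / (2 * \<mu>)"
      using assms by (subst powr_mult) auto
    also have "\<dots> \<le> 2 * (r / \<xi>) powr \<mu> / (2 * \<mu>)"
      using two assms by (intro divide_right_mono mult_right_mono) auto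
    also have "\<dots> \<le> 4 / \<mu> * (r / \<xi>) powr \<mu>"
      using assms by (simp add: field_simps)
    finally show ?thesis using False by (simp add: omega_scale_def)
  qed
  ultimately show ?thesis by linarith
qed

definition diff_profile :: "real \<Rightarrow> real \<Rightarrow> real" where
  "diff_profile \<mu> s = (if s \<le> 1 then s\<^sup>2 else s powr \<mu>)"

lemma diff_profile_nonneg: "0 \<le> diff_profile \<mu> s"
  by (simp add: diff_profile_def)

lemma diff_profile_measurable [measurable]: "diff_profile \<mu> \<in> borel_measurable borel"
  unfolding diff_profile_def by measurable

lemma omega_unit_second_diff_le:
  assumes "0 < \<mu>" "\<mu> \<le> 1" "0 < \<xi>" "0 < r"
    and "0 \<le> a" "a \<le> \<xi> + r" "0 \<le> b" "b \<le> \<xi> + r"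
    and ab: "a + b \<le> 2 * \<xi> + r\<^sup>2 / \<xi>"
  shows "(omega_unit \<mu> a + omega_unit \<mu> b) / 2 - omega_unit \<mu> \<xi>
           \<le> 4 / \<mu> * omega_scale \<mu> \<xi> * diff_profile \<mu> (r / \<xi>)"
proof (cases "r \<le> \<xi>")
  case True
  define D where "D = omega_unit_deriv \<mu> \<xi>"
  have D: "0 \<le> D" using omega_unit_deriv_nonneg assms by (simp add: D_def)
  have "omega_unit \<mu> a \<le> omega_unit \<mu> \<xi> + D * (a - \<xi>)" "omega_unit \<mu> b \<le> omega_unit \<mu> \<xi> + D * (b - \<xi>)"
    using omega_unit_le_tangent assms by (simp_all add: D_def)
  moreover have "D * ((a + b) / 2 - \<xi>) = (D * (a - \<xi>) + D * (b - \<xi>)) / 2"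
    by (simp add: algebra_simps)
  ultimately have "(omega_unit \<mu> a + omega_unit \<mu> b) / 2 - omega_unit \<mu> \<xi> \<le> D * ((a + b) / 2 - \<xi>)"
    by argo
  also have "\<dots> \<le> D * (r\<^sup>2 / \<xi> / 2)"
  proof -
    have "(a + b) / 2 - \<xi> \<le> r\<^sup>2 / \<xi> / 2" using ab by argo
    then show ?thesis using D by (rule mult_left_mono)
  qed
  also have "\<dots> = (D * \<xi>) * (r / \<xi>)\<^sup>2 / 2" using assms by (simp add: power2_eq_square field_simps)
  also have "\<dots> \<le> omega_scale \<mu> \<xi> * (r / \<xi>)\<^sup>2 / 2"
    using omega_unit_deriv_mult_le[of \<mu> \<xi>] assms by (intro divide_right_mono mult_right_mono) (auto simp: D_def)
  also have "\<dots> \<le> 4 / \<mu> * omega_scale \<mu> \<xi> * (r / \<xi>)\<^sup>2"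
  proof -
    have "1 / 2 \<le> 4 / \<mu>" using assms by (simp add: field_simps)
    from mult_right_mono[OF this, of "omega_scale \<mu> \<xi> * (r / \<xi>)\<^sup>2"] show ?thesis
      using omega_scale_nonneg[of \<mu> \<xi>] by (simp add: mult_ac)
  qed
  finally show ?thesis using True assms by (simp add: diff_profile_def)
next
  case False
  then have profile: "diff_profile \<mu> (r / \<xi>) = (r / \<xi>) powr \<mu>" using assms by (simp add: diff_profile_def)
  have "omega_unit \<mu> a - omega_unit \<mu> \<xi> \<le> 4 / \<mu> * omega_scale \<mu> \<xi> * (r / \<xi>) powr \<mu>"
      "omega_unit \<mu> b - omega_unit \<mu> \<xi> \<le> 4 / \<mu> * omega_scale \<mu> \<xi> * (r / \<xi>) powr \<mu>"
    using False omega_unit_diff_le_far assms by auto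
  then show ?thesis unfolding profile by argo
qed

lemma omega_mod_second_diff_le:
  assumes "0 < \<mu>" "\<mu> \<le> 1" "0 < lam" "0 \<le> \<delta>" "0 < \<xi>" "0 < r"
    and "0 \<le> a" "a \<le> \<xi> + r" "0 \<le> b" "b \<le> \<xi> + r"
    and ab: "a + b \<le> 2 * \<xi> + r\<^sup>2 / \<xi>"
  shows "(omega_mod \<delta> \<mu> lam a + omega_mod \<delta> \<mu> lam b) / 2 - omega_mod \<delta> \<mu> lam \<xi>
           \<le> 4 / \<mu> * \<delta> * omega_scale \<mu> (\<xi> / lam) * diff_profile \<mu> (r / \<xi>)"
proof -
  have "a / lam + b / lam \<le> (2 * \<xi> + r\<^sup>2 / \<xi>) / lam"
    unfolding add_divide_distrib[symmetric] by (rule divide_right_mono[OF ab]) (use assms in simp)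
  also have "\<dots> = 2 * (\<xi> / lam) + (r / lam)\<^sup>2 / (\<xi> / lam)"
    using assms(3,5) by (simp add: power2_eq_square add_divide_distrib)
  finally have ab_scaled: "a / lam + b / lam \<le> 2 * (\<xi> / lam) + (r / lam)\<^sup>2 / (\<xi> / lam)" .
  have "(omega_unit \<mu> (a / lam) + omega_unit \<mu> (b / lam)) / 2 - omega_unit \<mu> (\<xi> / lam)
      \<le> 4 / \<mu> * omega_scale \<mu> (\<xi> / lam) * diff_profile \<mu> ((r / lam) / (\<xi> / lam))"
    using assms ab_scaled by (intro omega_unit_second_diff_le) (auto simp: divide_right_mono simp flip: add_divide_distrib)
  then have "\<delta> * ((omega_unit \<mu> (a / lam) + omega_unit \<mu> (b / lam)) / 2 - omega_unit \<mu> (\<xi> / lam))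
      \<le> \<delta> * (4 / \<mu> * omega_scale \<mu> (\<xi> / lam) * diff_profile \<mu> (r / \<xi>))"
    using assms by (intro mult_left_mono) auto
  then show ?thesis using assms omega_mod_eq_scaled[OF assms(3)] by (simp add: algebra_simps)
qed

lemma norm_diff_add_norm_add_le:
  fixes x z :: "'a::real_inner"
  assumes "x \<noteq> 0"
  shows "norm (x - z) + norm (x + z) \<le> 2 * norm x + (norm z)\<^sup>2 / norm x"
proof -
  have "(norm (x - z) + norm (x + z))\<^sup>2 \<le> 2 * ((norm (x - z))\<^sup>2 + (norm (x + z))\<^sup>2)"
    using sum_squares_bound[of "norm (x - z)" "norm (x + z)"] by (simp add: power2_eq_square algebra_simps)
  also have "\<dots> = 4 * ((norm x)\<^sup>2 + (norm z)\<^sup>2)"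
    by (simp add: power2_norm_eq_inner inner_add_left inner_add_right inner_diff_left inner_diff_right
        inner_commute algebra_simps)
  also have "\<dots> \<le> (2 * norm x + (norm z)\<^sup>2 / norm x)\<^sup>2"
    using assms by (simp add: power2_eq_square field_simps)
  finally show ?thesis by (rule power2_le_imp_le) (use assms in simp)
qed

section \<open>Integrability of the kernel\<close>

lemma nn_integral_norm_powr_shell_le:
  fixes p t :: real
  assumes t: "0 < t"
  shows "(\<integral>\<^sup>+w. ennreal (norm w powr (-p))
           * indicator {w::'a::euclidean_space. t/2 < norm w \<and> norm w \<le> t} w \<partial>lborel)
    \<le> ennreal (2 powr \<bar>p\<bar> * unit_ball_vol DIM('a) * t powr (DIM('a) - p))"
proof -
  define c where "c = 2 powr \<bar>p\<bar> * t powr (-p)"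
  have bound: "norm w powr (-p) \<le> c" if "t/2 < norm w" "norm w \<le> t" for w :: 'a
  proof (cases "p \<ge> 0")
    case True
    have "norm w powr (-p) \<le> (t/2) powr (-p)" using that t True by (intro powr_mono2') auto
    also have "(t/2) powr (-p) = c" using t True
      by (simp add: c_def powr_divide powr_minus field_simps)
    finally show ?thesis .
  next
    case False
    have "norm w powr (-p) \<le> t powr (-p)" using that t False by (intro powr_mono2) auto
    also have "\<dots> = 1 * t powr (-p)" by simp
    also have "\<dots> \<le> c" unfolding c_def by (intro mult_right_mono) (auto simp: ge_one_powr_ge_zero)
    finally show ?thesis .
  qed
  have "(\<integral>\<^sup>+w. ennreal (norm w powr (-p)) * indicator {w::'a. t/2 < norm w \<and> norm w \<le> t} w \<partial>lborel)
     \<le> (\<integral>\<^sup>+w. ennreal c * indicator (cball (0::'a) t) w \<partial>lborel)"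
    by (intro nn_integral_mono) (auto simp: indicator_def ennreal_leI bound)
  also have "\<dots> = ennreal c * emeasure lborel (cball (0::'a) t)"
    by (simp add: nn_integral_cmult_indicator)
  also have "\<dots> = ennreal (c * (unit_ball_vol DIM('a) * t ^ DIM('a)))"
    using t by (simp add: emeasure_cball c_def ennreal_mult)
  also have "c * (unit_ball_vol DIM('a) * t ^ DIM('a)) = 2 powr \<bar>p\<bar> * unit_ball_vol DIM('a) * t powr (DIM('a) - p)"
    using t by (simp add: c_def powr_realpow[symmetric] powr_diff powr_minus field_simps)
  finally show ?thesis .
qed

lemma nn_integral_norm_powr_shells_finite:
  fixes p :: real and t :: "nat \<Rightarrow> real" and U :: "'a::euclidean_space set"
  assumes t: "\<And>k. 0 < t k"
    and cover: "\<And>w. w \<in> U \<Longrightarrow> \<exists>k. t k / 2 < norm w \<and> norm w \<le> t k"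
    and summable_powr: "summable (\<lambda>k. t k powr (DIM('a) - p))"
  shows "(\<integral>\<^sup>+w. ennreal (norm w powr (-p)) * indicator U w \<partial>lborel) < \<infinity>"
proof -
  define S where "S k = {w::'a. t k / 2 < norm w \<and> norm w \<le> t k}" for k
  define C where "C = 2 powr \<bar>p\<bar> * unit_ball_vol DIM('a)"
  have [measurable]: "S k \<in> sets lborel" for k unfolding S_def by measurable
  have "ennreal (norm w powr (-p)) * indicator U w \<le> (\<Sum>k. ennreal (norm w powr (-p)) * indicator (S k) w)" for w
  proof (cases "w \<in> U")
    case True
    then obtain k where k: "w \<in> S k" using cover unfolding S_def by blast
    have "ennreal (norm w powr (-p)) * indicator U w = (\<Sum>i\<in>{k}. ennreal (norm w powr (-p)) * indicator (S i) w)"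
      using True k by simp
    also have "\<dots> \<le> (\<Sum>i. ennreal (norm w powr (-p)) * indicator (S i) w)"
      by (intro sum_le_suminf) (auto intro: summableI)
    finally show ?thesis .
  qed simp
  then have "(\<integral>\<^sup>+w. ennreal (norm w powr (-p)) * indicator U w \<partial>lborel)
      \<le> (\<integral>\<^sup>+w. (\<Sum>k. ennreal (norm w powr (-p)) * indicator (S k) w) \<partial>lborel)"
    by (intro nn_integral_mono)
  also have "\<dots> = (\<Sum>k. \<integral>\<^sup>+w. ennreal (norm w powr (-p)) * indicator (S k) w \<partial>lborel)"
    by (rule nn_integral_suminf) measurable
  also have "\<dots> \<le> (\<Sum>k. ennreal (C * t k powr (DIM('a) - p)))"
    unfolding S_def C_def by (intro suminf_le summableI nn_integral_norm_powr_shell_le t)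
  also have "\<dots> = ennreal (\<Sum>k. C * t k powr (DIM('a) - p))"
    by (intro suminf_ennreal2 summable_mult summable_powr) (auto simp: C_def)
  finally show ?thesis using order.strict_trans1 by fastforce
qed

lemma powr_ceiling_log_bracket:
  fixes r :: real
  assumes "0 < r"
  shows "2 powr (real_of_int \<lceil>log 2 r\<rceil> - 1) < r" "r \<le> 2 powr (real_of_int \<lceil>log 2 r\<rceil>)"
proof -
  have "2 powr (real_of_int \<lceil>log 2 r\<rceil> - 1) < 2 powr (log 2 r)"
    by (intro powr_less_mono) linarith+
  then show "2 powr (real_of_int \<lceil>log 2 r\<rceil> - 1) < r" using assms by simp
  have "2 powr (log 2 r) \<le> 2 powr (real_of_int \<lceil>log 2 r\<rceil>)"
    by (intro powr_mono) auto
  then show "r \<le> 2 powr (real_of_int \<lceil>log 2 r\<rceil>)" using assms by simp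
qed

lemma nn_integral_norm_powr_ball_finite:
  fixes s :: real
  assumes "0 < s"
  shows "(\<integral>\<^sup>+w. ennreal (norm w powr (s - DIM('a)))
           * indicator {w::'a::euclidean_space. 0 < norm w \<and> norm w \<le> 1} w \<partial>lborel) < \<infinity>"
proof -
  define t where "t k = 2 powr (- real k)" for k
  have "(\<integral>\<^sup>+w. ennreal (norm w powr (- (DIM('a) - s)))
          * indicator {w::'a. 0 < norm w \<and> norm w \<le> 1} w \<partial>lborel) < \<infinity>"
  proof (rule nn_integral_norm_powr_shells_finite)
    show "0 < t k" for k by (simp add: t_def)
    have "2 powr (- s) < 2 powr 0" using assms by (intro powr_less_mono) auto
    moreover have "t k powr (DIM('a) - (DIM('a) - s)) = (2 powr (- s)) ^ k" for k
      by (simp add: t_def powr_powr powr_power mult_ac)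
    ultimately show "summable (\<lambda>k. t k powr (DIM('a) - (DIM('a) - s)))" by (simp add: summable_geometric)
    fix w :: 'a assume "w \<in> {w. 0 < norm w \<and> norm w \<le> 1}"
    then have w: "0 < norm w" "norm w \<le> 1" by auto
    define j where "j = \<lceil>log 2 (norm w)\<rceil>"
    have "log 2 (norm w) \<le> 0" using w by simp
    then have "t (nat (- j)) = 2 powr (real_of_int j)" unfolding j_def t_def by simp
    then show "\<exists>k. t k / 2 < norm w \<and> norm w \<le> t k"
      using powr_ceiling_log_bracket[OF w(1)] unfolding j_def[symmetric]
      by (intro exI[of _ "nat (- j)"]) (simp add: powr_diff)
  qed
  then show ?thesis by simp
qed

lemma nn_integral_norm_powr_outside_ball_finite:
  fixes s :: real
  assumes "0 < s"
  shows "(\<integral>\<^sup>+w. ennreal (norm w powr (- s - DIM('a)))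
           * indicator {w::'a::euclidean_space. 1 < norm w} w \<partial>lborel) < \<infinity>"
proof -
  define t where "t k = 2 powr (real k + 1)" for k
  have "(\<integral>\<^sup>+w. ennreal (norm w powr (- (DIM('a) + s))) * indicator {w::'a. 1 < norm w} w \<partial>lborel) < \<infinity>"
  proof (rule nn_integral_norm_powr_shells_finite)
    show "0 < t k" for k by (simp add: t_def)
    have "2 powr (- s) < 2 powr 0" using assms by (intro powr_less_mono) auto
    moreover have "t k powr (DIM('a) - (DIM('a) + s)) = 2 powr (- s) * (2 powr (- s)) ^ k" for k
      by (simp add: t_def powr_powr powr_power powr_add[symmetric] algebra_simps)
    ultimately show "summable (\<lambda>k. t k powr (DIM('a) - (DIM('a) + s)))"
      by (simp add: summable_geometric summable_mult)
    fix w :: 'a assume "w \<in> {w. 1 < norm w}"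
    then have w: "0 < norm w" "1 < norm w" by auto
    define j where "j = \<lceil>log 2 (norm w)\<rceil>"
    have "0 < log 2 (norm w)" using w by simp
    then have "t (nat (j - 1)) = 2 powr (real_of_int j)" unfolding j_def t_def by simp
    then show "\<exists>k. t k / 2 < norm w \<and> norm w \<le> t k"
      using powr_ceiling_log_bracket[OF w(1)] unfolding j_def[symmetric]
      by (intro exI[of _ "nat (j - 1)"]) (simp add: powr_diff)
  qed
  then show ?thesis by (simp add: algebra_simps)
qed

lemma nn_integral_diff_profile_finite:
  fixes \<alpha> \<mu> :: real
  assumes "\<mu> < \<alpha>" "\<alpha> < 2"
  shows "(\<integral>\<^sup>+w. ennreal (diff_profile \<mu> (norm w) / norm w powr (DIM('a) + \<alpha>))
           \<partial>(lborel :: 'a::euclidean_space measure)) < \<infinity>"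
proof -
  let ?B = "{w::'a. 0 < norm w \<and> norm w \<le> 1}" and ?O = "{w::'a. 1 < norm w}"
  have integrand_eq: "ennreal (diff_profile \<mu> (norm w) / norm w powr (DIM('a) + \<alpha>))
     = ennreal (norm w powr ((2 - \<alpha>) - DIM('a))) * indicator ?B w
       + ennreal (norm w powr (- (\<alpha> - \<mu>) - DIM('a))) * indicator ?O w" for w :: 'a
  proof (cases "w = 0")
    case False
    then have w: "0 < norm w" by simp
    have "(norm w)\<^sup>2 / norm w powr (DIM('a) + \<alpha>) = norm w powr ((2 - \<alpha>) - DIM('a))"
      using w by (simp add: powr_diff[symmetric] flip: powr_numeral) (simp add: algebra_simps)
    moreover have "norm w powr \<mu> / norm w powr (DIM('a) + \<alpha>) = norm w powr (- (\<alpha> - \<mu>) - DIM('a))"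
      by (simp add: powr_diff[symmetric]) (simp add: algebra_simps)
    ultimately show ?thesis using w by (simp add: diff_profile_def indicator_def)
  qed (simp add: diff_profile_def)
  have "(\<integral>\<^sup>+w. ennreal (diff_profile \<mu> (norm w) / norm w powr (DIM('a) + \<alpha>)) \<partial>(lborel :: 'a measure))
     = (\<integral>\<^sup>+w. ennreal (norm w powr ((2 - \<alpha>) - DIM('a))) * indicator ?B w \<partial>lborel)
       + (\<integral>\<^sup>+w. ennreal (norm w powr (- (\<alpha> - \<mu>) - DIM('a))) * indicator ?O w \<partial>lborel)"
    unfolding integrand_eq by (rule nn_integral_add) measurable
  also have "\<dots> < \<infinity>"
    using nn_integral_norm_powr_ball_finite[of "2 - \<alpha>"] nn_integral_norm_powr_outside_ball_finite[of "\<alpha> - \<mu>"] assms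
    by simp
  finally show ?thesis .
qed

section \<open>The truncated integrals\<close>

lemma lborel_distr_uminus_euclidean: "distr lborel borel uminus = (lborel :: 'a::euclidean_space measure)"
  using lborel_affine[of "-1" "0::'a"] by (simp add: density_1)

lemma nn_integral_lborel_affine:
  fixes f :: "'a::euclidean_space \<Rightarrow> ennreal" and c :: real
  assumes [measurable]: "f \<in> borel_measurable borel" and c: "c \<noteq> 0"
  shows "(\<integral>\<^sup>+x. f x \<partial>lborel) = ennreal (\<bar>c\<bar> ^ DIM('a)) * (\<integral>\<^sup>+x. f (t + c *\<^sub>R x) \<partial>lborel)"
  by (subst lborel_affine[OF c, of t]) (simp add: nn_integral_density nn_integral_distr nn_integral_cmult)

(* The nonnegativity of h covers the case of a non-integrable f, whose integral is 0. *)
lemma integral_le_of_symmetrization_le: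
  fixes f h :: "'a::euclidean_space \<Rightarrow> real"
  assumes [measurable]: "f \<in> borel_measurable borel"
    and h: "integrable lborel h" "\<And>z. 0 \<le> h z"
    and fh: "\<And>z. (f z + f (- z)) / 2 \<le> h z"
  shows "integral\<^sup>L lborel f \<le> integral\<^sup>L lborel h"
proof (cases "integrable lborel f")
  case True
  have reflect: "integral\<^sup>L lborel (\<lambda>z. f (- z)) = integral\<^sup>L lborel f"
    using integral_distr[of uminus lborel borel f] by (simp add: lborel_distr_uminus_euclidean)
  have "integrable lborel (\<lambda>z. f (- z))"
    using True integrable_distr_eq[of uminus lborel borel f] by (simp add: lborel_distr_uminus_euclidean)
  then have "integral\<^sup>L lborel f = integral\<^sup>L lborel (\<lambda>z. (f z + f (- z)) / 2)"
    using True reflect by simp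
  also have "\<dots> \<le> integral\<^sup>L lborel h"
    using True \<open>integrable lborel (\<lambda>z. f (- z))\<close> h fh by (intro integral_mono) auto
  finally show ?thesis .
next
  case False
  then show ?thesis using h by (simp add: not_integrable_integral_eq integral_nonneg)
qed

lemma omega_mod_measurable [measurable]: "omega_mod \<delta> \<mu> lam \<in> borel_measurable borel"
  unfolding omega_mod_def by measurable

lemma has_bochner_integral_diff_profile_scaled:
  fixes \<xi> q M :: real
  assumes "0 < \<xi>"
    and M: "(\<integral>\<^sup>+w. ennreal (diff_profile \<mu> (norm w) / norm w powr q) \<partial>(lborel :: 'a::euclidean_space measure))
              = ennreal M" "0 \<le> M"
  shows "has_bochner_integral (lborel :: 'a measure) (\<lambda>z. diff_profile \<mu> (norm z / \<xi>) / norm z powr q)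
           (\<xi> powr (DIM('a) - q) * M)"
proof (rule has_bochner_integral_nn_integral)
  let ?f = "\<lambda>z::'a. diff_profile \<mu> (norm z / \<xi>) / norm z powr q"
  have "(\<integral>\<^sup>+z. ennreal (?f z) \<partial>lborel) = ennreal (\<xi> ^ DIM('a)) * (\<integral>\<^sup>+w. ennreal (?f (\<xi> *\<^sub>R w)) \<partial>lborel)"
    using nn_integral_lborel_affine[of "\<lambda>z. ennreal (?f z)" \<xi> 0] \<open>0 < \<xi>\<close> by simp
  also have "(\<lambda>w. ennreal (?f (\<xi> *\<^sub>R w)))
      = (\<lambda>w. ennreal (\<xi> powr (-q)) * ennreal (diff_profile \<mu> (norm w) / norm w powr q))"
  proof
    fix w :: 'a
    have scaled: "?f (\<xi> *\<^sub>R w) = \<xi> powr (-q) * (diff_profile \<mu> (norm w) / norm w powr q)"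
      using \<open>0 < \<xi>\<close> by (simp add: powr_mult powr_minus field_simps)
    show "ennreal (?f (\<xi> *\<^sub>R w)) = ennreal (\<xi> powr (-q)) * ennreal (diff_profile \<mu> (norm w) / norm w powr q)"
      unfolding scaled by (rule ennreal_mult) (simp_all add: diff_profile_nonneg)
  qed
  also have "(\<integral>\<^sup>+w. ennreal (\<xi> powr (-q)) * ennreal (diff_profile \<mu> (norm w) / norm w powr q) \<partial>(lborel :: 'a measure))
      = ennreal (\<xi> powr (-q)) * ennreal M"
    using M(1) by (simp add: nn_integral_cmult)
  also have "ennreal (\<xi> ^ DIM('a)) * (ennreal (\<xi> powr (-q)) * ennreal M) = ennreal (\<xi> powr (DIM('a) - q) * M)"
    using M(2) \<open>0 < \<xi>\<close>
    by (simp add: powr_realpow[symmetric] powr_add[symmetric] mult.assoc flip: ennreal_mult)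
  finally show "(\<integral>\<^sup>+z. ennreal (?f z) \<partial>lborel) = ennreal (\<xi> powr (DIM('a) - q) * M)" .
qed (use M(2) diff_profile_nonneg in auto)

lemma set_integral_omega_mod_diff_le:
  fixes e :: "'a::euclidean_space" and \<alpha> M :: real
  assumes e: "e \<in> Basis" and "0 < \<mu>" "\<mu> \<le> 1" "0 < lam" "0 \<le> \<delta>" "0 < \<xi>"
    and M: "(\<integral>\<^sup>+w. ennreal (diff_profile \<mu> (norm w) / norm w powr (DIM('a) + \<alpha>)) \<partial>(lborel :: 'a measure))
              = ennreal M" "0 \<le> M"
  shows "(LINT z : {z::'a. norm z > \<epsilon>} | lborel.
           (omega_mod \<delta> \<mu> lam (norm (\<xi> *\<^sub>R e - z)) - omega_mod \<delta> \<mu> lam \<xi>) / norm z powr (DIM('a) + \<alpha>))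
         \<le> 4 / \<mu> * \<delta> * omega_scale \<mu> (\<xi> / lam) * \<xi> powr (-\<alpha>) * M"
proof -
  define q where "q = real DIM('a) + \<alpha>"
  define B where "B = 4 / \<mu> * \<delta> * omega_scale \<mu> (\<xi> / lam)"
  define g where "g z = indicator {z::'a. norm z > \<epsilon>} z
      * ((omega_mod \<delta> \<mu> lam (norm (\<xi> *\<^sub>R e - z)) - omega_mod \<delta> \<mu> lam \<xi>) / norm z powr q)" for z
  define h where "h = (\<lambda>z::'a. B * (diff_profile \<mu> (norm z / \<xi>) / norm z powr q))"
  have [measurable]: "g \<in> borel_measurable borel" unfolding g_def by measurable
  have h_nonneg: "0 \<le> h z" for z
    using assms omega_scale_nonneg[of \<mu>] diff_profile_nonneg[of \<mu>] by (simp add: h_def B_def)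
  have "has_bochner_integral lborel h (B * (\<xi> powr (DIM('a) - q) * M))"
    using \<open>0 < \<xi>\<close> M unfolding h_def q_def
    by (intro has_bochner_integral_mult_right has_bochner_integral_diff_profile_scaled)
  then have h_int: "integrable lborel h" and h_integral: "integral\<^sup>L lborel h = B * \<xi> powr (-\<alpha>) * M"
    by (simp_all add: has_bochner_integral_iff q_def)
  have "(g z + g (- z)) / 2 \<le> h z" for z
  proof (cases "\<epsilon> < norm z \<and> z \<noteq> 0")
    case True
    define a b where "a = norm (\<xi> *\<^sub>R e - z)" and "b = norm (\<xi> *\<^sub>R e + z)"
    have norm_e: "norm (\<xi> *\<^sub>R e) = \<xi>" using e \<open>0 < \<xi>\<close> by simp
    have "a \<le> \<xi> + norm z" "b \<le> \<xi> + norm z"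
      unfolding a_def b_def using norm_triangle_ineq4 norm_triangle_ineq norm_e by metis+
    moreover have "a + b \<le> 2 * \<xi> + (norm z)\<^sup>2 / \<xi>"
      unfolding a_def b_def using norm_diff_add_norm_add_le[of "\<xi> *\<^sub>R e" z] norm_e \<open>0 < \<xi>\<close> nonzero_Basis[OF e]
      by simp
    ultimately have second_diff: "(omega_mod \<delta> \<mu> lam a + omega_mod \<delta> \<mu> lam b) / 2 - omega_mod \<delta> \<mu> lam \<xi>
        \<le> B * diff_profile \<mu> (norm z / \<xi>)"
      unfolding B_def using assms True by (intro omega_mod_second_diff_le) (auto simp: a_def b_def)
    have "(g z + g (- z)) / 2
        = ((omega_mod \<delta> \<mu> lam a + omega_mod \<delta> \<mu> lam b) / 2 - omega_mod \<delta> \<mu> lam \<xi>) / norm z powr q"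
      using True by (simp add: g_def a_def b_def field_simps)
    also have "\<dots> \<le> h z"
      unfolding h_def times_divide_eq_right by (rule divide_right_mono[OF second_diff]) simp
    finally show ?thesis .
  next
    case False
    then have "g z = 0" "g (- z) = 0" by (auto simp: g_def)
    then show ?thesis using h_nonneg[of z] by simp
  qed
  then have "integral\<^sup>L lborel g \<le> integral\<^sup>L lborel h"
    using h_int h_nonneg by (intro integral_le_of_symmetrization_le) auto
  then show ?thesis
    by (simp add: set_lebesgue_integral_def g_def[abs_def] q_def B_def h_integral)
qed

lemma frac_const_nonneg:
  assumes "0 < \<alpha>"
  shows "0 \<le> frac_const d \<alpha>"
proof -
  have "0 < Gamma ((real d + \<alpha>) / 2)" using assms by (intro Gamma_real_pos) simp
  then show ?thesis unfolding frac_const_def by (intro divide_nonneg_nonneg mult_nonneg_nonneg) auto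
qed

lemma A_pv_le:
  fixes e :: "'a::euclidean_space" and \<alpha> M :: real
  assumes "e \<in> Basis" "0 < \<alpha>" "0 < \<mu>" "\<mu> \<le> 1" "0 < lam" "0 \<le> \<delta>" "0 < \<xi>"
    and "(\<integral>\<^sup>+w. ennreal (diff_profile \<mu> (norm w) / norm w powr (DIM('a) + \<alpha>)) \<partial>(lborel :: 'a measure))
           = ennreal M" "0 \<le> M"
  shows "A_pv \<alpha> \<delta> \<mu> lam e \<xi>
           \<le> frac_const DIM('a) \<alpha> * (4 / \<mu> * \<delta> * omega_scale \<mu> (\<xi> / lam) * \<xi> powr (-\<alpha>) * M)"
proof -
  have "A_trunc \<alpha> \<delta> \<mu> lam e \<xi> \<epsilon>
      \<le> frac_const DIM('a) \<alpha> * (4 / \<mu> * \<delta> * omega_scale \<mu> (\<xi> / lam) * \<xi> powr (-\<alpha>) * M)" for \<epsilon>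
    unfolding A_trunc_def using assms frac_const_nonneg
    by (intro mult_left_mono set_integral_omega_mod_diff_le) auto
  then show ?thesis
    unfolding A_pv_def by (intro Limsup_bounded always_eventually) simp
qed

theorem lemma3p4:
  fixes \<alpha> \<mu> :: real
  assumes "0 < \<alpha>" "\<alpha> < 2" "0 < \<mu>" "\<mu> < min \<alpha> 1"
  shows "\<exists>C2>0. \<forall>lam>0. \<forall>\<delta>. 0 < \<delta> \<and> \<delta> < 1 \<longrightarrow>
           (\<forall>e\<in>(Basis :: 'a::euclidean_space set). \<forall>\<xi>>0.
              A_pv \<alpha> \<delta> \<mu> lam e \<xi> \<le>
                ereal (if \<xi> \<le> lam then C2 * \<delta> * lam powr (-\<mu>) * \<xi> powr (\<mu> - \<alpha>)
                       else C2 * \<delta> * \<xi> powr (-\<alpha>)))"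
proof -
  have \<mu>: "0 < \<mu>" "\<mu> \<le> 1" "\<mu> < \<alpha>" using assms by auto
  have "(\<integral>\<^sup>+w. ennreal (diff_profile \<mu> (norm w) / norm w powr (DIM('a) + \<alpha>)) \<partial>(lborel :: 'a measure)) < \<infinity>"
    using nn_integral_diff_profile_finite \<mu>(3) assms(2) by blast
  then obtain M where M: "0 \<le> M"
    "(\<integral>\<^sup>+w. ennreal (diff_profile \<mu> (norm w) / norm w powr (DIM('a) + \<alpha>)) \<partial>(lborel :: 'a measure)) = ennreal M"
    by (cases rule: ennreal_cases) auto
  define C2 where "C2 = frac_const DIM('a) \<alpha> * 4 / \<mu> * M + 1"
  have "0 \<le> frac_const DIM('a) \<alpha>" using frac_const_nonneg assms(1) .
  then have C2: "0 < C2" using M \<mu> by (simp add: C2_def add_nonneg_pos)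
  have bound: "A_pv \<alpha> \<delta> \<mu> lam e \<xi> \<le> C2 * (\<delta> * omega_scale \<mu> (\<xi> / lam) * \<xi> powr (-\<alpha>))"
    if "0 < lam" "0 < \<delta>" "e \<in> (Basis :: 'a set)" "0 < \<xi>" for lam \<delta> e \<xi>
  proof -
    have "A_pv \<alpha> \<delta> \<mu> lam e \<xi>
        \<le> frac_const DIM('a) \<alpha> * (4 / \<mu> * \<delta> * omega_scale \<mu> (\<xi> / lam) * \<xi> powr (-\<alpha>) * M)"
      using that assms M by (intro A_pv_le) auto
    also have "\<dots> \<le> C2 * (\<delta> * omega_scale \<mu> (\<xi> / lam) * \<xi> powr (-\<alpha>))"
      using \<open>0 \<le> frac_const DIM('a) \<alpha>\<close> M \<mu> that omega_scale_nonneg[of \<mu> "\<xi> / lam"]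
      by (simp add: C2_def field_simps)
    finally show ?thesis .
  qed
  have branches: "C2 * (\<delta> * omega_scale \<mu> (\<xi> / lam) * \<xi> powr (-\<alpha>))
      = (if \<xi> \<le> lam then C2 * \<delta> * lam powr (-\<mu>) * \<xi> powr (\<mu> - \<alpha>) else C2 * \<delta> * \<xi> powr (-\<alpha>))"
    if "0 < lam" "0 < \<xi>" for lam \<delta> \<xi>
    using that by (simp add: omega_scale_def powr_divide powr_diff powr_minus field_simps)
  show ?thesis
    using C2 bound branches by (intro exI[of _ C2]) auto
qed

end
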